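(* Let $G=(V,E)$ be a reaction network in $\mathbb{R}^n$ with deficiency zero that is not weakly reversible. Then for every choice of rate constants $\mathbf{k}\in\mathbb{R}^{|E|}_{>0}$ and every initial condition $\mathbf{x}_0\in\mathbb{R}^n_{>0}$ whose stoichiometric compatibility class $\mathcal{S}_{\mathbf{x}_0}$ is bounded, the solution $\mathbf{x}(t)$ of the mass-action system $(G,\mathbf{k})$ with $\mathbf{x}(0)=\mathbf{x}_0$ satisfies $\liminf_{t\to\infty}x_i(t)=0$ for some $1\le i\le n$; i.e., $(G,\mathbf{k})$ exhibits weak extinction in some species $X_i$.
   Context: A reaction network $G=(V,E)$ is a finite directed graph with vertex set $V\subset\mathbb{Z}^n_{\ge0}$, no self-loops, no isolated vertices, at most one edge per ordered pair; an edge $\mathbf{y}\to\mathbf{y}'$ is a reaction. Species $X_1,\dots,X_n$ correspond to the coordinates $x_1,\dots,x_n$. Linkage classes are the connected components of the underlying undirected graph; $G$ is weakly reversible if every reaction lies on a directed cycle. The stoichiometric subspace is $\mathcal{S}_G=\operatorname{span}\{\mathbf{y}'-\mathbf{y}:\mathbf{y}\to\mathbf{y}'\in E\}$ and the deficiency is $|V|-\ell-\dim\mathcal{S}_G$ with $\ell$ the number of linkage classes. The mass-action system $(G,\mathbf{k})$ with $\mathbf{k}\in\mathbb{R}^{|E|}_{>0}$ is $\dot{\mathbf{x}}=\sum_{\mathbf{y}\to\mathbf{y}'\in E}k_{\mathbf{y}\to\mathbf{y}'}\mathbf{x}^{\mathbf{y}}(\mathbf{y}'-\mathbf{y})$ on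 $\mathbb{R}^n_{>0}$, with $\mathbf{x}^{\mathbf{y}}=\prod_i x_i^{y_i}$; $\mathbb{R}^n_{>0}$ is forward invariant and solutions stay in the stoichiometric compatibility class $\mathcal{S}_{\mathbf{x}_0}=(\mathbf{x}_0+\mathcal{S}_G)\cap\mathbb{R}^n_{>0}$. The system exhibits weak extinction in $X_i$ if for some $\mathbf{x}_0\in\mathbb{R}^n_{>0}$ the solution satisfies $\liminf_{t\to\infty}x_i(t)=0$. *)

theory Defs
  imports "HOL-Analysis.Analysis" "HOL-Library.Liminf_Limsup"
begin

text \<open>Species are indexed by a finite type 'n (so n = CARD('n)).
  A reaction network is given by its finite set of reactions E; the vertex set
  is the set of endpoints of reactions (no isolated vertices).\<close>

type_synonym 'n complex = "nat ^ 'n"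
type_synonym 'n network = "('n complex \<times> 'n complex) set"

definition reaction_network :: "('n::finite) network \<Rightarrow> bool" where
  "reaction_network E \<longleftrightarrow> finite E \<and> (\<forall>(y, y') \<in> E. y \<noteq> y')"

definition vertices :: "('n::finite) network \<Rightarrow> 'n complex set" where
  "vertices E = fst ` E \<union> snd ` E"

definition cvec :: "'n complex \<Rightarrow> real ^ 'n" where
  "cvec y = (\<chi> i. real (y $ i))"

definition stoich_subspace :: "('n::finite) network \<Rightarrow> (real ^ 'n) set" where
  "stoich_subspace E = span {cvec y' - cvec y | y y'. (y, y') \<in> E}"

definition linkage_classes :: "('n::finite) network \<Rightarrow> 'n complex set set" where
  "linkage_classes E = vertices E // ((E \<union> E\<inverse>)\<^sup>*)"

definition deficiency :: "('n::finite) network \<Rightarrow> int" where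
  "deficiency E = int (card (vertices E)) - int (card (linkage_classes E))
                   - int (dim (stoich_subspace E))"

definition weakly_reversible :: "('n::finite) network \<Rightarrow> bool" where
  "weakly_reversible E \<longleftrightarrow> (\<forall>(y, y') \<in> E. (y', y) \<in> E\<^sup>*)"

definition monomial :: "real ^ ('n::finite) \<Rightarrow> 'n complex \<Rightarrow> real" where
  "monomial x y = (\<Prod>i\<in>UNIV. (x $ i) ^ (y $ i))"

definition mass_action :: "('n::finite) network \<Rightarrow> ('n complex \<times> 'n complex \<Rightarrow> real)
    \<Rightarrow> real ^ 'n \<Rightarrow> real ^ 'n" where
  "mass_action E k x = (\<Sum>(y, y') \<in> E. (k (y, y') * monomial x y) *\<^sub>R (cvec y' - cvec y))"

definition pos_orthant :: "(real ^ ('n::finite)) set" where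
  "pos_orthant = {x. \<forall>i. x $ i > 0}"

definition compat_class :: "('n::finite) network \<Rightarrow> real ^ 'n \<Rightarrow> (real ^ 'n) set" where
  "compat_class E x0 = ((\<lambda>v. x0 + v) ` stoich_subspace E) \<inter> pos_orthant"

definition is_solution :: "('n::finite) network \<Rightarrow> ('n complex \<times> 'n complex \<Rightarrow> real)
    \<Rightarrow> real ^ 'n \<Rightarrow> (real \<Rightarrow> real ^ 'n) \<Rightarrow> bool" where
  "is_solution E k x0 x \<longleftrightarrow> x 0 = x0 \<and>
     (\<forall>t \<ge> 0. x t \<in> pos_orthant \<and>
        (x has_vector_derivative mass_action E k (x t)) (at t within {0..}))"

end

theory Submission
  imports Defs
begin

text \<open>Deficiency zero means that every function L on the complexes is the potential of a linear
  functional w on the species space: w \<bullet> (y' - y) = L y' - L y for every reaction y \<rightarrow> y'.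
  If the network is not weakly reversible, some reaction y0 \<rightarrow> y0' cannot be reversed, and
  taking for L the indicator of the complexes reachable from y0' gives a functional that does
  not decrease along any reaction and increases along y0 \<rightarrow> y0'. Hence w \<bullet> x(t) is
  nondecreasing, and if no species had liminf zero, the monomial of y0 would be bounded below
  and w \<bullet> x(t) would grow linearly, contradicting the boundedness of the compatibility class.\<close>

lemma separating_vector_from_span:
  fixes v :: "'a::euclidean_space"
  assumes "v \<notin> span S"
  obtains z where "\<And>s. s \<in> span S \<Longrightarrow> z \<bullet> s = 0" and "z \<bullet> v \<noteq> 0"
proof -
  obtain p z where p: "p \<in> span S" and z: "\<And>s. s \<in> span S \<Longrightarrow> orthogonal z s" and "v = p + z"
    using orthogonal_subspace_decomp_exists by blast
  then have "z \<noteq> 0" using assms by auto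
  then have "z \<bullet> v \<noteq> 0"
    using z[OF p] \<open>v = p + z\<close> by (simp add: orthogonal_def inner_add_right)
  with z show thesis using that by (auto simp: orthogonal_def)
qed

lemma linkage_class_representatives:
  fixes E :: "'n::finite network"
  obtains rep where "\<And>v. (v, rep v) \<in> (E \<union> E\<inverse>)\<^sup>*"
    and "\<And>a b. (a, b) \<in> (E \<union> E\<inverse>)\<^sup>* \<Longrightarrow> rep a = rep b"
    and "rep ` vertices E \<subseteq> vertices E"
    and "card (rep ` vertices E) = card (linkage_classes E)"
proof
  define R where "R = (E \<union> E\<inverse>)\<^sup>*"
  have equiv: "equiv UNIV R"
    by (auto simp: R_def equiv_def refl_rtrancl trans_rtrancl sym_rtrancl sym_Un_converse)
  define rep where "rep v = (SOME u. (v, u) \<in> R)" for v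
  show rel: "(v, rep v) \<in> R" for v
    unfolding rep_def by (rule someI[of _ v]) (simp add: R_def)
  show same: "rep a = rep b" if "(a, b) \<in> R" for a b
    using equiv_class_eq[OF equiv that] unfolding rep_def Image_singleton
    by (metis mem_Collect_eq)
  show reps: "rep ` vertices E \<subseteq> vertices E"
  proof -
    have "b \<in> vertices E" if "(a, b) \<in> R" "a \<in> vertices E" for a b
      using that unfolding R_def
      by (induction rule: rtrancl_induct) (force simp: vertices_def)+
    then show ?thesis using rel by blast
  qed
  have classes: "linkage_classes E = (\<lambda>u. R``{u}) ` rep ` vertices E"
    unfolding linkage_classes_def quotient_def R_def[symmetric] image_image
    using equiv_class_eq[OF equiv rel] by auto
  have "inj_on (\<lambda>u. R``{u}) (rep ` vertices E)"
  proof (rule inj_onI)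
    fix a b assume "a \<in> rep ` vertices E" "b \<in> rep ` vertices E" "R``{a} = R``{b}"
    then have "rep a = rep b" and "rep a = a" and "rep b = b"
      using same rel eq_equiv_class_iff[OF equiv] by (metis UNIV_I imageE)+
    then show "a = b" by simp
  qed
  then show "card (rep ` vertices E) = card (linkage_classes E)"
    by (simp add: classes card_image)
qed

lemma dim_reaction_differences_le:
  fixes E :: "'n::finite network" and g :: "'n complex \<Rightarrow> 'b::euclidean_space"
  assumes "finite E"
  shows "dim {g y' - g y | y y'. (y, y') \<in> E} \<le> card (vertices E) - card (linkage_classes E)"
proof -
  obtain rep where rel: "\<And>v. (v, rep v) \<in> (E \<union> E\<inverse>)\<^sup>*"
    and same: "\<And>a b. (a, b) \<in> (E \<union> E\<inverse>)\<^sup>* \<Longrightarrow> rep a = rep b"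
    and reps: "rep ` vertices E \<subseteq> vertices E"
    and card_reps: "card (rep ` vertices E) = card (linkage_classes E)"
    using linkage_class_representatives[of E] by blast
  define V where "V = vertices E"
  have "finite V" using assms by (simp add: V_def vertices_def)
  define f where "f v = g v - g (rep v)" for v
  have f_in_span: "f v \<in> span (f ` (V - rep ` V))" if "v \<in> V" for v
  proof (cases "v \<in> rep ` V")
    case True
    then have "f v = 0" using same[OF rel] by (auto simp: f_def)
    then show ?thesis by (simp add: span_zero)
  next
    case False
    then show ?thesis using that by (simp add: span_base)
  qed
  have "{g y' - g y | y y'. (y, y') \<in> E} \<subseteq> span (f ` (V - rep ` V))"
  proof clarify
    fix y y' assume "(y, y') \<in> E"
    then have "rep y = rep y'" "y \<in> V" "y' \<in> V"
      by (auto intro!: same simp: V_def vertices_def image_iff) force+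
    then have "g y' - g y = f y' - f y" by (simp add: f_def)
    then show "g y' - g y \<in> span (f ` (V - rep ` V))"
      using f_in_span \<open>y \<in> V\<close> \<open>y' \<in> V\<close> by (simp add: span_diff)
  qed
  then have "dim {g y' - g y | y y'. (y, y') \<in> E} \<le> card (f ` (V - rep ` V))"
    by (rule dim_le_card) (simp add: \<open>finite V\<close>)
  also have "\<dots> \<le> card (V - rep ` V)"
    by (rule card_image_le) (simp add: \<open>finite V\<close>)
  also have "\<dots> = card V - card (rep ` V)"
    using reps \<open>finite V\<close> by (simp add: V_def card_Diff_subset finite_subset)
  finally show ?thesis by (simp add: card_reps V_def)
qed

text \<open>The graph of L over the reaction vectors spans a space G of dimension at most
  card V - \<ell>, which by deficiency zero is dim S. As G projects onto S, containing the
  vertical vector (0, 1) would force S \<times> \<real> \<subseteq> G, which is too big. So some vector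
  orthogonal to G is not orthogonal to (0, 1), and it encodes w.\<close>

lemma deficiency_zero_potential:
  fixes E :: "'n::finite network" and L :: "'n complex \<Rightarrow> real"
  assumes "finite E" and "deficiency E = 0"
  obtains w :: "real ^ 'n" where "\<And>y y'. (y, y') \<in> E \<Longrightarrow> w \<bullet> (cvec y' - cvec y) = L y' - L y"
proof -
  define g where "g v = (cvec v, L v)" for v
  define G where "G = {g y' - g y | y y'. (y, y') \<in> E}"
  let ?S = "stoich_subspace E"
  have "fst ` span G = ?S"
  proof -
    have "fst ` G = {cvec y' - cvec y | y y'. (y, y') \<in> E}"
      unfolding G_def g_def by force
    then show ?thesis
      using span_linear_image[OF linear_fst, of G] by (simp add: stoich_subspace_def)
  qed
  have dim_G: "dim G \<le> dim ?S"
    using dim_reaction_differences_le[OF \<open>finite E\<close>, of g] \<open>deficiency E = 0\<close>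
    by (simp add: G_def deficiency_def)
  have "(0, 1) \<notin> span G"
  proof
    assume vertical: "(0, 1) \<in> span G"
    have "?S \<times> UNIV \<subseteq> span G"
    proof clarify
      fix u and r :: real assume "u \<in> ?S"
      then obtain p where "p \<in> span G" "fst p = u"
        using \<open>fst ` span G = ?S\<close> by force
      moreover have "(u, r) = p + (r - snd p) *\<^sub>R (0, 1)"
        using \<open>fst p = u\<close> by (cases p) simp
      ultimately show "(u, r) \<in> span G"
        using vertical by (metis span_add span_scale)
    qed
    then have "dim (?S \<times> (UNIV :: real set)) \<le> dim G"
      by (metis dim_span dim_subset)
    moreover have "dim (?S \<times> (UNIV :: real set)) = dim ?S + 1"
      by (simp add: dim_Times stoich_subspace_def)
    ultimately show False using dim_G by linarith
  qed
  then obtain z where z: "\<And>s. s \<in> span G \<Longrightarrow> z \<bullet> s = 0" and "z \<bullet> (0, 1) \<noteq> 0"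
    using separating_vector_from_span[of "(0, 1)" G] by blast
  obtain w0 b where "z = (w0, b)" by (cases z)
  with \<open>z \<bullet> (0, 1) \<noteq> 0\<close> have "b \<noteq> 0" by simp
  show thesis
  proof
    fix y y' assume "(y, y') \<in> E"
    then have "z \<bullet> (g y' - g y) = 0" by (intro z span_base) (auto simp: G_def)
    then have "w0 \<bullet> (cvec y' - cvec y) + b * (L y' - L y) = 0"
      using \<open>z = (w0, b)\<close> by (simp add: g_def)
    then show "(- (1 / b) *\<^sub>R w0) \<bullet> (cvec y' - cvec y) = L y' - L y"
      using \<open>b \<noteq> 0\<close> by (simp add: field_simps)
  qed
qed

lemma not_weakly_reversible_nondecreasing_functional:
  fixes E :: "'n::finite network"
  assumes "finite E" and "deficiency E = 0" and "(y0, y0') \<in> E" and "(y0', y0) \<notin> E\<^sup>*"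
  obtains w :: "real ^ 'n" where "\<And>y y'. (y, y') \<in> E \<Longrightarrow> 0 \<le> w \<bullet> (cvec y' - cvec y)"
    and "w \<bullet> (cvec y0' - cvec y0) = 1"
proof -
  define L where "L v = (if (y0', v) \<in> E\<^sup>* then 1 else 0 :: real)" for v
  obtain w where w: "\<And>y y'. (y, y') \<in> E \<Longrightarrow> w \<bullet> (cvec y' - cvec y) = L y' - L y"
    using deficiency_zero_potential[OF assms(1,2)] by blast
  show thesis
  proof
    fix y y' assume "(y, y') \<in> E"
    then have "L y \<le> L y'" by (auto simp: L_def intro: rtrancl_into_rtrancl)
    then show "0 \<le> w \<bullet> (cvec y' - cvec y)" using w[OF \<open>(y, y') \<in> E\<close>] by simp
  next
    show "w \<bullet> (cvec y0' - cvec y0) = 1" using w[OF assms(3)] assms(4) by (simp add: L_def)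
  qed
qed

lemma monomial_pos: "(\<And>i. 0 < x $ i) \<Longrightarrow> 0 < monomial x y"
  by (simp add: monomial_def prod_pos)

lemma monomial_mono:
  assumes "\<And>i. 0 \<le> x $ i" and "\<And>i. x $ i \<le> x' $ i"
  shows "monomial x y \<le> monomial x' y"
  unfolding monomial_def using assms by (intro prod_mono conjI power_mono zero_le_power) auto

lemma inner_mass_action:
  "w \<bullet> mass_action E k x = (\<Sum>r\<in>E. k r * monomial x (fst r) * (w \<bullet> (cvec (snd r) - cvec (fst r))))"
  by (simp add: mass_action_def inner_sum_right case_prod_unfold)

lemma inner_mass_action_ge_reaction:
  assumes "finite E" and "\<forall>r \<in> E. 0 \<le> k r"
    and "\<And>y y'. (y, y') \<in> E \<Longrightarrow> 0 \<le> w \<bullet> (cvec y' - cvec y)"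
    and "(y0, y0') \<in> E" and "\<And>i. 0 \<le> c $ i" and "\<And>i. c $ i \<le> x $ i"
  shows "k (y0, y0') * monomial c y0 * (w \<bullet> (cvec y0' - cvec y0)) \<le> w \<bullet> mass_action E k x"
proof -
  let ?f = "\<lambda>r. k r * monomial x (fst r) * (w \<bullet> (cvec (snd r) - cvec (fst r)))"
  have "0 \<le> x $ i" for i using assms(5,6) order_trans by blast
  then have "0 \<le> monomial x y" for y
    unfolding monomial_def by (simp add: prod_nonneg)
  with assms(1-4) have "?f (y0, y0') \<le> w \<bullet> mass_action E k x"
    unfolding inner_mass_action by (intro member_le_sum) (auto intro!: mult_nonneg_nonneg)
  moreover have "monomial c y0 \<le> monomial x y0" using assms(5,6) by (rule monomial_mono)
  ultimately show ?thesis
    using assms(2-4) by (auto elim!: order_trans[rotated] intro!: mult_right_mono mult_left_mono)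
qed

lemma is_solution_inner_has_derivative:
  assumes "is_solution E k x0 x" and "0 \<le> t"
  shows "((\<lambda>s. w \<bullet> x s) has_real_derivative w \<bullet> mass_action E k (x t)) (at t within {0..})"
  using assms bounded_linear.has_vector_derivative[OF bounded_linear_inner_right,
      of x "mass_action E k (x t)" "at t within {0..}" w]
  by (simp add: is_solution_def has_real_derivative_iff_has_vector_derivative)

lemma is_solution_inner_has_derivative_at:
  assumes "is_solution E k x0 x" and "0 < t"
  shows "((\<lambda>s. w \<bullet> x s) has_real_derivative w \<bullet> mass_action E k (x t)) (at t)"
proof -
  have "at t within {0..} = at t" using assms(2) by (intro at_within_interior) simp
  then show ?thesis
    using is_solution_inner_has_derivative[OF assms(1) less_imp_le[OF assms(2)]] by simp
qed

lemma is_solution_in_compat_class: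
  assumes sol: "is_solution E k x0 x" and "0 \<le> t"
  shows "x t \<in> compat_class E x0"
proof -
  let ?G = "{cvec y' - cvec y | y y'. (y, y') \<in> E}"
  have "x t - x0 \<in> span ?G"
  proof (rule ccontr)
    assume "x t - x0 \<notin> span ?G"
    then obtain z where z: "\<And>s. s \<in> span ?G \<Longrightarrow> z \<bullet> s = 0" and "z \<bullet> (x t - x0) \<noteq> 0"
      using separating_vector_from_span[of "x t - x0" ?G] by blast
    have "\<exists>c. \<forall>s\<in>{0..}. z \<bullet> x s = c"
    proof (rule has_field_derivative_zero_constant)
      fix s :: real assume "s \<in> {0..}"
      have "z \<bullet> (cvec y' - cvec y) = 0" if "(y, y') \<in> E" for y y'
        using that by (blast intro: z span_base)
      then have "z \<bullet> mass_action E k (x s) = 0"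
        unfolding inner_mass_action by (auto intro!: sum.neutral)
      then show "((\<lambda>s. z \<bullet> x s) has_real_derivative 0) (at s within {0..})"
        using is_solution_inner_has_derivative[OF sol, of s z] \<open>s \<in> {0..}\<close> by simp
    qed (simp add: convex_real_interval)
    then have "z \<bullet> x t = z \<bullet> x 0" using \<open>0 \<le> t\<close> by fastforce
    with \<open>z \<bullet> (x t - x0) \<noteq> 0\<close> show False
      using sol by (simp add: is_solution_def inner_diff_right)
  qed
  moreover have "x t \<in> pos_orthant" using sol \<open>0 \<le> t\<close> by (simp add: is_solution_def)
  ultimately show ?thesis
    unfolding compat_class_def stoich_subspace_def by (auto intro: image_eqI[of _ _ "x t - x0"])
qed

lemma is_solution_bounded:
  assumes "is_solution E k x0 x" and "bounded (compat_class E x0)"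
  shows "bounded (x ` {0..})"
  using assms(2) by (rule bounded_subset) (auto intro: is_solution_in_compat_class[OF assms(1)])

lemma Liminf_nonzero_imp_eventually_gt:
  fixes f :: "'a \<Rightarrow> real"
  assumes "eventually (\<lambda>t. 0 \<le> f t) F" and "Liminf F (\<lambda>t. ereal (f t)) \<noteq> 0"
  shows "\<exists>c>0. eventually (\<lambda>t. c < f t) F"
proof -
  have "ereal 0 \<le> Liminf F (\<lambda>t. ereal (f t))"
    using assms(1) by (intro Liminf_bounded) (simp add: eventually_mono)
  with assms(2) have "ereal 0 < Liminf F (\<lambda>t. ereal (f t))"
    by (simp add: order_le_less zero_ereal_def)
  then obtain c where "ereal 0 < ereal c" "ereal c < Liminf F (\<lambda>t. ereal (f t))"
    using ereal_dense2 by blast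
  then show ?thesis using less_LiminfD by fastforce
qed

lemma eventually_bounded_below_if_Liminf_nonzero:
  fixes x :: "real \<Rightarrow> real ^ 'n::finite"
  assumes "\<And>t. 0 \<le> t \<Longrightarrow> x t \<in> pos_orthant"
    and "\<And>i. Liminf at_top (\<lambda>t. ereal (x t $ i)) \<noteq> 0"
  shows "\<exists>c \<in> pos_orthant. \<exists>T. \<forall>t \<ge> T. \<forall>i. c $ i \<le> x t $ i"
proof -
  have "\<exists>c>0. eventually (\<lambda>t. c < x t $ i) at_top" for i
  proof (rule Liminf_nonzero_imp_eventually_gt[OF _ assms(2)])
    show "eventually (\<lambda>t. 0 \<le> x t $ i) at_top"
      using eventually_ge_at_top[of 0]
      by eventually_elim (use assms(1) in \<open>simp add: pos_orthant_def less_imp_le\<close>)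
  qed
  then obtain c where c_pos: "\<And>i. 0 < c i" and "\<And>i. eventually (\<lambda>t. c i < x t $ i) at_top"
    by metis
  then have "eventually (\<lambda>t. \<forall>i. c i < x t $ i) at_top"
    by (intro eventually_all_finite)
  then obtain T where "\<And>t i. T \<le> t \<Longrightarrow> c i < x t $ i"
    by (auto simp: eventually_at_top_linorder)
  then show ?thesis
    using c_pos by (intro bexI[of _ "\<chi> i. c i"] exI[of _ T]) (auto simp: pos_orthant_def less_imp_le)
qed

lemma derivative_ge_pos_imp_unbounded:
  fixes g :: "real \<Rightarrow> real"
  assumes "0 < a" and "\<And>t. T \<le> t \<Longrightarrow> \<exists>d. (g has_real_derivative d) (at t) \<and> a \<le> d"
  shows "\<not> bounded (g ` {T..})"
proof
  assume "bounded (g ` {T..})"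
  then obtain B where B: "\<And>t. T \<le> t \<Longrightarrow> \<bar>g t\<bar> \<le> B"
    by (auto simp: bounded_iff)
  define t where "t = T + (2 * B + 1) / a"
  have "0 \<le> B" using B[of T] by simp
  then have "T \<le> t" using \<open>0 < a\<close> by (simp add: t_def)
  have "(\<lambda>s. g s - a * s) T \<le> (\<lambda>s. g s - a * s) t"
  proof (rule DERIV_nonneg_imp_nondecreasing[OF \<open>T \<le> t\<close>])
    fix s assume "T \<le> s"
    then obtain d where "(g has_real_derivative d) (at s)" "a \<le> d" using assms(2) by blast
    then show "\<exists>d. ((\<lambda>s. g s - a * s) has_real_derivative d) (at s) \<and> 0 \<le> d"
      by (intro exI[of _ "d - a"]) (auto intro!: derivative_eq_intros)
  qed
  moreover have "a * (t - T) = 2 * B + 1" using \<open>0 < a\<close> by (simp add: t_def)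
  ultimately show False using B[of T] B[OF \<open>T \<le> t\<close>] by (simp add: algebra_simps)
qed

theorem theorem1p2:
  fixes E :: "'n::finite network"
    and k :: "'n complex \<times> 'n complex \<Rightarrow> real"
    and x0 :: "real ^ 'n"
    and x :: "real \<Rightarrow> real ^ 'n"
  assumes "reaction_network E"
    and "deficiency E = 0"
    and "\<not> weakly_reversible E"
    and "\<forall>r \<in> E. k r > 0"
    and "x0 \<in> pos_orthant"
    and "bounded (compat_class E x0)"
    and "is_solution E k x0 x"
  shows "\<exists>i. Liminf at_top (\<lambda>t. ereal (x t $ i)) = 0"
proof (rule ccontr)
  assume "\<nexists>i. Liminf at_top (\<lambda>t. ereal (x t $ i)) = 0"
  moreover have "\<And>t. 0 \<le> t \<Longrightarrow> x t \<in> pos_orthant" using assms(7) by (simp add: is_solution_def)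
  ultimately obtain c T where "c \<in> pos_orthant" and c: "\<And>t i. T \<le> t \<Longrightarrow> c $ i \<le> x t $ i"
    using eventually_bounded_below_if_Liminf_nonzero[of x] by blast
  have "finite E" using assms(1) by (simp add: reaction_network_def)
  obtain y0 y0' where r0: "(y0, y0') \<in> E" "(y0', y0) \<notin> E\<^sup>*"
    using assms(3) by (auto simp: weakly_reversible_def)
  obtain w where w: "\<And>y y'. (y, y') \<in> E \<Longrightarrow> 0 \<le> w \<bullet> (cvec y' - cvec y)"
    and w_r0: "w \<bullet> (cvec y0' - cvec y0) = 1"
    using not_weakly_reversible_nondecreasing_functional[OF \<open>finite E\<close> assms(2) r0] by blast
  define a where "a = k (y0, y0') * monomial c y0"
  have "0 < a"
    using assms(4) r0(1) \<open>c \<in> pos_orthant\<close> by (simp add: a_def monomial_pos pos_orthant_def)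
  have rate: "a \<le> w \<bullet> mass_action E k (x t)" if "T \<le> t" for t
    using inner_mass_action_ge_reaction[OF \<open>finite E\<close> _ w r0(1), of k c "x t"] w_r0 assms(4)
      \<open>c \<in> pos_orthant\<close> c[OF that] by (simp add: a_def pos_orthant_def less_imp_le)
  have "\<not> bounded ((\<lambda>t. w \<bullet> x t) ` {max T 1..})"
  proof (rule derivative_ge_pos_imp_unbounded[OF \<open>0 < a\<close>])
    fix t assume "max T 1 \<le> t"
    then show "\<exists>d. ((\<lambda>t. w \<bullet> x t) has_real_derivative d) (at t) \<and> a \<le> d"
      using rate is_solution_inner_has_derivative_at[OF assms(7), of t w] by auto
  qed
  moreover have "bounded ((\<lambda>t. w \<bullet> x t) ` {max T 1..})"
    using bounded_linear_image[OF is_solution_bounded[OF assms(7,6)] bounded_linear_inner_right]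
    by (rule bounded_subset) auto
  ultimately show False by contradiction
qed

end
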